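(* Let $\pi_1\in\mathcal{T}_k$ and $\pi_2\in\mathcal{T}_\ell$ be two-stack sortable permutations. Then $D(C_1(\pi_1,\pi_2))=(\pi_1,\pi_2)$, and $D(C_2(\pi_1,\pi_2,i))=(\pi_1,\pi_2)$ for every $1\le i\le\operatorname{slmax}(\pi_2)$.
   Context: For a finite sequence $A$ of distinct integers, the stack-sorting operator $\mathcal{S}$ is defined by $\mathcal{S}(\epsilon)=\epsilon$ for the empty sequence and, if $A$ is non-empty with largest element $m$, writing $A=A_L\cdot(m)\cdot A_R$ (concatenation), $\mathcal{S}(A)=\mathcal{S}(A_L)\cdot\mathcal{S}(A_R)\cdot(m)$. For $n\ge1$, $\mathcal{T}_n$ is the set of two-stack sortable permutations $\sigma\in\mathfrak{S}_n$, i.e. with $\mathcal{S}(\mathcal{S}(\sigma))$ the identity. For a sequence $A$ of distinct integers, $P(A)$ is the permutation with the same relative order as $A$. For a sequence $\tau$: $\tau^{+k}$ adds $k$ to each element; for $k_1<k_2$, $\tau^{+(k_1,m,k_2)}$ adds $k_1$ to elements strictly smaller than $m$ and $k_2$ to the others. $\operatorname{slmax}(\sigma)$ is the number of left-to-right maxima of $\mathcal{S}(\sigma)$; if $a_1,\dots,a_t$ are their values in order, define $C_1(\pi_1,\pi_2)=\pi_1\cdot(k+\ell+1)\cdot\pi_2^{+k}$ and $C_2(\pi_1,\pi_2,i)=\pi_1^{+(0,k,a_i)}\cdot(k+\ell+1)\cdot\pi_2^{+(k-1,a_i+1,k)}$ (with $a_i$ taken from $\mathcal{S}(\pi_2)$).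 For a permutation $\pi$ of length $n\ge1$ written $\pi=\pi_\ell\cdot(n)\cdot\pi_r$ (parts before and after the entry $n$), $D(\pi)=(P(\pi_\ell),P(\pi_r))$. *)

theory Defs
  imports Main "HOL-Combinatorics.Multiset_Permutations"
begin

(* Sequences of distinct integers are represented as lists of naturals
   (all sequences in the statement have positive entries);
   a permutation of [n] is an element of permutations_of_set {1..n}. *)

lemma takeWhile_neq_shorter:
  "m \<in> set xs \<Longrightarrow> length (takeWhile (\<lambda>x. x \<noteq> m) xs) < length xs"
  by (induction xs) auto

lemma tl_dropWhile_shorter:
  "xs \<noteq> [] \<Longrightarrow> length (tl (dropWhile P xs)) < length xs"
proof -
  assume "xs \<noteq> []"
  moreover have "length (dropWhile P xs) \<le> length xs" by (rule length_dropWhile_le)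
  ultimately show ?thesis by (cases xs) auto
qed

function stack_sort :: "nat list \<Rightarrow> nat list" where
  "stack_sort [] = []"
| "stack_sort (x # xs) =
     (let m = Max (set (x # xs));
          L = takeWhile (\<lambda>y. y \<noteq> m) (x # xs);
          R = tl (dropWhile (\<lambda>y. y \<noteq> m) (x # xs))
      in stack_sort L @ stack_sort R @ [m])"
  by pat_completeness auto
termination
proof (relation "measure length")
  show "wf (measure length)" by simp
next
  fix x :: nat and xs m L
  assume "m = Max (set (x # xs))" "L = takeWhile (\<lambda>y. y \<noteq> m) (x # xs)"
  moreover have "m \<in> set (x # xs)" using \<open>m = _\<close> Max_in[of "set (x # xs)"] by (simp only: List.finite_set) simp
  ultimately show "(L, x # xs) \<in> measure length"
    using takeWhile_neq_shorter[of m "x # xs"] by (simp only: in_measure)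
next
  fix x :: nat and xs m R
  assume "R = tl (dropWhile (\<lambda>y. y \<noteq> m) (x # xs))"
  then show "(R, x # xs) \<in> measure length"
    using tl_dropWhile_shorter[of "x # xs" "\<lambda>y. y \<noteq> m"] by (simp only: in_measure list.simps(3) not_False_eq_True)
qed

definition two_stack_sortable :: "nat \<Rightarrow> nat list set" where
  "two_stack_sortable n =
     {\<sigma> \<in> permutations_of_set {1..n}. stack_sort (stack_sort \<sigma>) = [1..<n+1]}"

definition std :: "nat list \<Rightarrow> nat list" where
  "std A = map (\<lambda>a. card {b \<in> set A. b \<le> a}) A"

definition shift :: "nat \<Rightarrow> nat list \<Rightarrow> nat list" where
  "shift k \<tau> = map (\<lambda>x. x + k) \<tau>"

definition shift3 :: "nat \<Rightarrow> nat \<Rightarrow> nat \<Rightarrow> nat list \<Rightarrow> nat list" where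
  "shift3 k1 m k2 \<tau> = map (\<lambda>x. if x < m then x + k1 else x + k2) \<tau>"

definition lr_maxima :: "nat list \<Rightarrow> nat list" where
  "lr_maxima xs = [xs ! i. i \<leftarrow> [0..<length xs], \<forall>j<i. xs ! j < xs ! i]"

definition slmax :: "nat list \<Rightarrow> nat" where
  "slmax \<sigma> = length (lr_maxima (stack_sort \<sigma>))"

definition slmax_val :: "nat list \<Rightarrow> nat \<Rightarrow> nat" where
  "slmax_val \<pi> i = lr_maxima (stack_sort \<pi>) ! (i - 1)"

definition C1 :: "nat list \<Rightarrow> nat list \<Rightarrow> nat list" where
  "C1 \<pi>1 \<pi>2 = (let k = length \<pi>1; l = length \<pi>2
                 in \<pi>1 @ [k + l + 1] @ shift k \<pi>2)"

definition C2 :: "nat list \<Rightarrow> nat list \<Rightarrow> nat \<Rightarrow> nat list" where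
  "C2 \<pi>1 \<pi>2 i = (let k = length \<pi>1; l = length \<pi>2; a = slmax_val \<pi>2 i
                   in shift3 0 k a \<pi>1 @ [k + l + 1] @ shift3 (k - 1) (a + 1) k \<pi>2)"

definition D :: "nat list \<Rightarrow> nat list \<times> nat list" where
  "D \<pi> = (let n = length \<pi>
          in (std (takeWhile (\<lambda>x. x \<noteq> n) \<pi>), std (tl (dropWhile (\<lambda>x. x \<noteq> n) \<pi>))))"

end

theory Submission
  imports Defs
begin

(* The entry n = k + l + 1 of C1(pi1,pi2) and of C2(pi1,pi2,i) is preceded exactly by
   an order-isomorphic copy of pi1 and followed by one of pi2: both shifts applied to
   pi1 and pi2 are strictly increasing maps, and P is invariant under such maps. *)

lemma set_stack_sort [simp]: "set (stack_sort xs) = set xs"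
proof (induction xs rule: stack_sort.induct)
  case (2 x xs)
  define m where "m = Max (set (x # xs))"
  define L where "L = takeWhile (\<lambda>y. y \<noteq> m) (x # xs)"
  define R where "R = tl (dropWhile (\<lambda>y. y \<noteq> m) (x # xs))"
  have "m \<in> set (x # xs)"
    unfolding m_def by (intro Max_in) auto
  then have "dropWhile (\<lambda>y. y \<noteq> m) (x # xs) \<noteq> []"
       and "hd (dropWhile (\<lambda>y. y \<noteq> m) (x # xs)) = m"
    using hd_dropWhile[of "\<lambda>y. y \<noteq> m" "x # xs"] by (auto simp: dropWhile_eq_Nil_conv)
  then have decomp: "x # xs = L @ m # R"
    unfolding L_def R_def by (metis list.collapse takeWhile_dropWhile_id)
  have "stack_sort (x # xs) = stack_sort L @ stack_sort R @ [m]"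
    unfolding L_def R_def m_def by (simp only: stack_sort.simps Let_def)
  then have "set (stack_sort (x # xs)) = set L \<union> set R \<union> {m}"
    using "2.IH"(1)[OF m_def L_def] "2.IH"(2)[OF m_def refl R_def] by auto
  also have "\<dots> = set (x # xs)"
    unfolding decomp by auto
  finally show ?case .
qed simp

lemma set_lr_maxima_subset: "set (lr_maxima xs) \<subseteq> set xs"
  unfolding lr_maxima_def by auto

lemma slmax_val_mem:
  assumes "1 \<le> i" "i \<le> slmax \<pi>"
  shows "slmax_val \<pi> i \<in> set \<pi>"
proof -
  have "slmax_val \<pi> i \<in> set (lr_maxima (stack_sort \<pi>))"
    using assms unfolding slmax_val_def slmax_def by simp
  then show ?thesis
    using set_lr_maxima_subset by fastforce
qed

lemma two_stack_sortableD:
  assumes "\<sigma> \<in> two_stack_sortable n"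
  shows "set \<sigma> = {1..n}" "distinct \<sigma>" "length \<sigma> = n"
  using assms unfolding two_stack_sortable_def
  by (auto dest: permutations_of_setD simp: length_finite_permutations_of_set)

lemma std_permutation:
  assumes "xs \<in> permutations_of_set {1..n}"
  shows "std xs = xs"
proof -
  have "card {b \<in> set xs. b \<le> a} = a" if "a \<in> set xs" for a
  proof -
    have "{b \<in> set xs. b \<le> a} = {1..a}"
      using that permutations_of_setD(1)[OF assms] by auto
    then show ?thesis by simp
  qed
  then show ?thesis
    unfolding std_def by (simp add: map_idI)
qed

lemma std_map_strict_mono_on:
  assumes "strict_mono_on (set xs) f"
  shows "std (map f xs) = std xs"
proof -
  have "card {b \<in> f ` set xs. b \<le> f a} = card {b \<in> set xs. b \<le> a}" if a: "a \<in> set xs" for a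
  proof -
    have "{b \<in> f ` set xs. b \<le> f a} = f ` {b \<in> set xs. b \<le> a}"
      using strict_mono_on_less_eq[OF assms _ a] by auto
    also have "card \<dots> = card {b \<in> set xs. b \<le> a}"
      using strict_mono_on_imp_inj_on[OF assms] by (intro card_image) (auto intro: inj_on_subset)
    finally show ?thesis .
  qed
  then show ?thesis
    unfolding std_def by simp
qed

lemma std_shift [simp]: "std (shift k xs) = std xs"
  unfolding shift_def by (rule std_map_strict_mono_on) (auto simp: strict_mono_on_def)

lemma std_shift3:
  assumes "k1 \<le> k2"
  shows "std (shift3 k1 m k2 xs) = std xs"
  unfolding shift3_def using assms
  by (intro std_map_strict_mono_on) (auto simp: strict_mono_on_def)

lemma length_shift [simp]: "length (shift k xs) = length xs"
  unfolding shift_def by simp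

lemma length_shift3 [simp]: "length (shift3 k1 m k2 xs) = length xs"
  unfolding shift3_def by simp

lemma D_append_max:
  assumes "length A + length B + 1 \<notin> set A"
  shows "D (A @ [length A + length B + 1] @ B) = (std A, std B)"
proof -
  have "takeWhile (\<lambda>x. x \<noteq> n) (A @ [n] @ B) = A"
       "tl (dropWhile (\<lambda>x. x \<noteq> n) (A @ [n] @ B)) = B" if "n \<notin> set A" for n
    using that by (induction A) auto
  then show ?thesis
    using assms
    unfolding D_def by (simp add: Let_def)
qed

theorem proposition7:
  fixes \<pi>1 \<pi>2 :: "nat list" and k l :: nat
  assumes "1 \<le> k" and "1 \<le> l"
    and "\<pi>1 \<in> two_stack_sortable k" and "\<pi>2 \<in> two_stack_sortable l"
  shows "D (C1 \<pi>1 \<pi>2) = (\<pi>1, \<pi>2)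
         \<and> (\<forall>i. 1 \<le> i \<and> i \<le> slmax \<pi>2 \<longrightarrow> D (C2 \<pi>1 \<pi>2 i) = (\<pi>1, \<pi>2))"
proof -
  note \<pi>1 = two_stack_sortableD[OF assms(3)] and \<pi>2 = two_stack_sortableD[OF assms(4)]
  have std1: "std \<pi>1 = \<pi>1" and std2: "std \<pi>2 = \<pi>2"
    using std_permutation permutations_of_setI \<pi>1 \<pi>2 by metis+
  have "D (C1 \<pi>1 \<pi>2) = (\<pi>1, \<pi>2)"
    using D_append_max[of \<pi>1 "shift k \<pi>2"] \<pi>1 \<pi>2 std1 std2
    by (simp add: C1_def)
  moreover have "D (C2 \<pi>1 \<pi>2 i) = (\<pi>1, \<pi>2)" if "1 \<le> i" "i \<le> slmax \<pi>2" for i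
  proof -
    define a where "a = slmax_val \<pi>2 i"
    have "a \<le> l"
      using slmax_val_mem[OF that] \<pi>2 unfolding a_def by auto
    then have "k + l + 1 \<notin> set (shift3 0 k a \<pi>1)"
      using \<pi>1 unfolding shift3_def by auto
    then show ?thesis
      using D_append_max[of "shift3 0 k a \<pi>1" "shift3 (k - 1) (a + 1) k \<pi>2"] \<pi>1 \<pi>2
      by (simp add: C2_def Let_def std_shift3 std1 std2 flip: a_def)
  qed
  ultimately show ?thesis by blast
qed

end
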